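(* Let $\mathbf A$ be a WHB-algebra. Then $T(\mathbf A)=(\mathcal B(\mathbf A),\cup,\cap,{}^c,G_{\mathbf A},H_{\mathbf A},\emptyset,X(\mathbf A))$ is a tense algebra.
   Context: A WHB-algebra is an algebra $(A,\wedge,\vee,\to,\leftarrow,0,1)$ such that $(A,\wedge,\vee,0,1)$ is a bounded distributive lattice and for all $a,b,c\in A$: $a\to a=1$; $a\to(b\wedge c)=(a\to b)\wedge(a\to c)$; $(a\vee b)\to c=(a\to c)\wedge(b\to c)$; $(a\to b)\wedge(b\to c)\le a\to c$; $a\leftarrow a=0$; $(a\vee b)\leftarrow c=(a\leftarrow c)\vee(b\leftarrow c)$; $a\leftarrow(b\wedge c)=(a\leftarrow b)\vee(a\leftarrow c)$; $a\leftarrow c\le(a\leftarrow b)\vee(b\leftarrow c)$; $a\wedge((a\to b)\leftarrow 0)\le b$; $a\le b\vee(1\to(a\leftarrow b))$. $X(\mathbf A)$ is the set of prime filters of $\mathbf A$, $\sigma_{\mathbf A}(a)=\{P\colon a\in P\}$, $\tau_{\mathbf A}$ the topology on $X(\mathbf A)$ with subbase $\{\sigma_{\mathbf A}(a)\}\cup\{X(\mathbf A)\setminus\sigma_{\mathbf A}(a)\}$, and $\mathcal B(\mathbf A)$ the set of $\tau_{\mathbf A}$-clopen subsets (equivalently, finite unions of sets $\sigma_{\mathbf A}(a)\setminus\sigma_{\mathbf A}(b)$). $(P,Q)\in R_{\mathbf A}$ iff for all $a,b$ ($a\to b\in P$, $a\in Q$ imply $b\in Q$); $(P,Q)\in S_{\mathbf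 A}$ iff for all $a,b$ ($a\in Q$, $b\notin Q$ imply $a\leftarrow b\in P$). $G_{\mathbf A}(U)=\{P\colon R_{\mathbf A}(P)\subseteq U\}$ and $H_{\mathbf A}(U)=\{P\colon S_{\mathbf A}(P)\subseteq U\}$, where $\mathcal R(P)=\{Q\colon(P,Q)\in\mathcal R\}$. A tense algebra is $(\mathbf B,G,H)$ with $\mathbf B$ a Boolean algebra and unary operations $G,H$ such that, with $P(x)=\neg H(\neg x)$ and $F(x)=\neg G(\neg x)$: $P(x)\le y\iff x\le G(y)$ and $F(x)\le y\iff x\le H(y)$ for all $x,y$. *)

theory Defs
  imports "HOL-Analysis.Analysis"
begin

definition WHB :: "('a::{distrib_lattice,bounded_lattice} \<Rightarrow> 'a \<Rightarrow> 'a) \<Rightarrow> ('a \<Rightarrow> 'a \<Rightarrow> 'a) \<Rightarrow> bool" where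
  "WHB imp coimp \<longleftrightarrow>
     (\<forall>a. imp a a = top) \<and>
     (\<forall>a b c. imp a (inf b c) = inf (imp a b) (imp a c)) \<and>
     (\<forall>a b c. imp (sup a b) c = inf (imp a c) (imp b c)) \<and>
     (\<forall>a b c. inf (imp a b) (imp b c) \<le> imp a c) \<and>
     (\<forall>a. coimp a a = bot) \<and>
     (\<forall>a b c. coimp (sup a b) c = sup (coimp a c) (coimp b c)) \<and>
     (\<forall>a b c. coimp a (inf b c) = sup (coimp a b) (coimp a c)) \<and>
     (\<forall>a b c. coimp a c \<le> sup (coimp a b) (coimp b c)) \<and>
     (\<forall>a b. inf a (coimp (imp a b) bot) \<le> b) \<and>
     (\<forall>a b. a \<le> sup b (imp top (coimp a b)))"

definition prime_filter :: "'a::{distrib_lattice,bounded_lattice} set \<Rightarrow> bool" where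
  "prime_filter P \<longleftrightarrow>
     top \<in> P \<and> bot \<notin> P \<and>
     (\<forall>a b. a \<in> P \<longrightarrow> a \<le> b \<longrightarrow> b \<in> P) \<and>
     (\<forall>a b. a \<in> P \<longrightarrow> b \<in> P \<longrightarrow> inf a b \<in> P) \<and>
     (\<forall>a b. sup a b \<in> P \<longrightarrow> a \<in> P \<or> b \<in> P)"

definition Xspec :: "'a::{distrib_lattice,bounded_lattice} set set" where
  "Xspec = {P. prime_filter P}"

definition sigmaA :: "'a::{distrib_lattice,bounded_lattice} \<Rightarrow> 'a set set" where
  "sigmaA a = {P \<in> Xspec. a \<in> P}"

definition tauA :: "'a::{distrib_lattice,bounded_lattice} set topology" where
  "tauA = topology_generated_by (range sigmaA \<union> range (\<lambda>a. Xspec - sigmaA a))"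

definition BA :: "'a::{distrib_lattice,bounded_lattice} set set set" where
  "BA = {U. openin tauA U \<and> closedin tauA U}"

definition RA :: "('a::{distrib_lattice,bounded_lattice} \<Rightarrow> 'a \<Rightarrow> 'a) \<Rightarrow> ('a set \<times> 'a set) set" where
  "RA imp = {(P, Q). P \<in> Xspec \<and> Q \<in> Xspec \<and> (\<forall>a b. imp a b \<in> P \<longrightarrow> a \<in> Q \<longrightarrow> b \<in> Q)}"

definition SA :: "('a::{distrib_lattice,bounded_lattice} \<Rightarrow> 'a \<Rightarrow> 'a) \<Rightarrow> ('a set \<times> 'a set) set" where
  "SA coimp = {(P, Q). P \<in> Xspec \<and> Q \<in> Xspec \<and> (\<forall>a b. a \<in> Q \<longrightarrow> b \<notin> Q \<longrightarrow> coimp a b \<in> P)}"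

definition GA :: "('a::{distrib_lattice,bounded_lattice} \<Rightarrow> 'a \<Rightarrow> 'a) \<Rightarrow> 'a set set \<Rightarrow> 'a set set" where
  "GA imp U = {P \<in> Xspec. RA imp `` {P} \<subseteq> U}"

definition HA :: "('a::{distrib_lattice,bounded_lattice} \<Rightarrow> 'a \<Rightarrow> 'a) \<Rightarrow> 'a set set \<Rightarrow> 'a set set" where
  "HA coimp U = {P \<in> Xspec. SA coimp `` {P} \<subseteq> U}"

text \<open>A tense algebra whose Boolean reduct is the field of sets B \<subseteq> Pow X with operations
  union, intersection, complement relative to X, bottom {} and top X; G and H are unary
  operations on B, with P(x) = -H(-x), F(x) = -G(-x) and the two adjunctions.\<close>
definition tense_algebra_of_sets ::
  "'x set \<Rightarrow> 'x set set \<Rightarrow> ('x set \<Rightarrow> 'x set) \<Rightarrow> ('x set \<Rightarrow> 'x set) \<Rightarrow> bool" where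
  "tense_algebra_of_sets X B G H \<longleftrightarrow>
     B \<subseteq> Pow X \<and> {} \<in> B \<and> X \<in> B \<and>
     (\<forall>U\<in>B. \<forall>V\<in>B. U \<union> V \<in> B \<and> U \<inter> V \<in> B) \<and>
     (\<forall>U\<in>B. X - U \<in> B) \<and>
     (\<forall>U\<in>B. G U \<in> B \<and> H U \<in> B) \<and>
     (\<forall>x\<in>B. \<forall>y\<in>B. (X - H (X - x) \<subseteq> y \<longleftrightarrow> x \<subseteq> G y)) \<and>
     (\<forall>x\<in>B. \<forall>y\<in>B. (X - G (X - x) \<subseteq> y \<longleftrightarrow> x \<subseteq> H y))"

end

theory Submission
  imports Defs
begin

(*
  Every clopen of the spectral space is a finite intersection of sets
  {P. m \<in> P \<longrightarrow> j \<in> P}, because the space is compact (Alexander's subbase theorem plus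
  the prime filter theorem). G maps such a set to sigma(m \<rightarrow> j) and H maps it to the
  complement of sigma(m \<leftarrow> j), so both preserve clopens. The nontrivial inclusions need
  a prime filter Q with m \<in> Q and j \<notin> Q that is R- resp. S-related to P; it is obtained
  from the prime filter theorem for the preorders "x \<rightarrow> y \<in> P" and "x \<leftarrow> y \<notin> P",
  which are compatible with meets on the right and joins on the left. Finally, the last two
  WHB axioms make S the converse of R, and the boxes of a relation and of its converse are
  conjugate, which yields both adjunctions.
*)

lemma prime_filter_top: "prime_filter P \<Longrightarrow> top \<in> P"
  unfolding prime_filter_def by blast

lemma prime_filter_bot: "prime_filter P \<Longrightarrow> bot \<notin> P"
  unfolding prime_filter_def by blast

lemma prime_filter_upward: "prime_filter P \<Longrightarrow> a \<in> P \<Longrightarrow> a \<le> b \<Longrightarrow> b \<in> P"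
  unfolding prime_filter_def by blast

lemma prime_filter_inf_iff: "prime_filter P \<Longrightarrow> inf a b \<in> P \<longleftrightarrow> a \<in> P \<and> b \<in> P"
  unfolding prime_filter_def by (meson inf_le1 inf_le2)

lemma prime_filter_sup_iff: "prime_filter P \<Longrightarrow> sup a b \<in> P \<longleftrightarrow> a \<in> P \<or> b \<in> P"
  unfolding prime_filter_def by (meson sup_ge1 sup_ge2)

lemma mem_Xspec_iff: "P \<in> Xspec \<longleftrightarrow> prime_filter P"
  unfolding Xspec_def by simp

section \<open>The prime filter theorem for lattice preorders\<close>

locale lattice_preorder =
  fixes rel :: "'a::{distrib_lattice,bounded_lattice} \<Rightarrow> 'a \<Rightarrow> bool" (infix \<open>\<preceq>\<close> 50)
  assumes le_imp_rel: "x \<le> y \<Longrightarrow> x \<preceq> y"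
    and rel_trans: "x \<preceq> y \<Longrightarrow> y \<preceq> z \<Longrightarrow> x \<preceq> z"
    and rel_infI: "x \<preceq> y \<Longrightarrow> x \<preceq> z \<Longrightarrow> x \<preceq> inf y z"
    and rel_supI: "x \<preceq> z \<Longrightarrow> y \<preceq> z \<Longrightarrow> sup x y \<preceq> z"
begin

lemma rel_refl: "x \<preceq> x"
  by (simp add: le_imp_rel)

definition preorder_filter :: "'a set \<Rightarrow> bool" where
  "preorder_filter F \<longleftrightarrow> top \<in> F \<and> (\<forall>x\<in>F. \<forall>y\<in>F. inf x y \<in> F) \<and> (\<forall>x\<in>F. \<forall>y. x \<preceq> y \<longrightarrow> y \<in> F)"

definition preorder_ideal :: "'a set \<Rightarrow> bool" where
  "preorder_ideal I \<longleftrightarrow> bot \<in> I \<and> (\<forall>x\<in>I. \<forall>y\<in>I. sup x y \<in> I) \<and> (\<forall>y\<in>I. \<forall>x. x \<preceq> y \<longrightarrow> x \<in> I)"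

lemma preorder_filterD:
  assumes "preorder_filter F"
  shows preorder_filter_top: "top \<in> F"
    and preorder_filter_inf: "x \<in> F \<Longrightarrow> y \<in> F \<Longrightarrow> inf x y \<in> F"
    and preorder_filter_upward: "x \<in> F \<Longrightarrow> x \<preceq> y \<Longrightarrow> y \<in> F"
  using assms unfolding preorder_filter_def by blast+

lemma preorder_idealD:
  assumes "preorder_ideal I"
  shows preorder_ideal_bot: "bot \<in> I"
    and preorder_ideal_sup: "x \<in> I \<Longrightarrow> y \<in> I \<Longrightarrow> sup x y \<in> I"
    and preorder_ideal_downward: "y \<in> I \<Longrightarrow> x \<preceq> y \<Longrightarrow> x \<in> I"
  using assms unfolding preorder_ideal_def by blast+

lemma preorder_filter_Union_chain:
  assumes "\<C> \<noteq> {}" and filters: "\<forall>F\<in>\<C>. preorder_filter F"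
    and chain: "\<forall>F\<in>\<C>. \<forall>G\<in>\<C>. F \<subseteq> G \<or> G \<subseteq> F"
  shows "preorder_filter (\<Union>\<C>)"
  unfolding preorder_filter_def
proof (intro conjI ballI allI impI)
  show "top \<in> \<Union>\<C>"
    using assms(1) filters preorder_filter_top by blast
  fix x y
  show "y \<in> \<Union>\<C>" if "x \<in> \<Union>\<C>" "x \<preceq> y"
    using filters that preorder_filter_upward by blast
  assume "x \<in> \<Union>\<C>" "y \<in> \<Union>\<C>"
  then obtain F G where "F \<in> \<C>" "G \<in> \<C>" "x \<in> F" "y \<in> G"
    by blast
  with chain consider "x \<in> G" "y \<in> G" | "x \<in> F" "y \<in> F"
    by blast
  then show "inf x y \<in> \<Union>\<C>"
    using filters preorder_filter_inf \<open>F \<in> \<C>\<close> \<open>G \<in> \<C>\<close> by cases blast+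
qed

lemma preorder_filter_extend:
  assumes F: "preorder_filter F"
  shows "preorder_filter {w. \<exists>q\<in>F. inf q z \<preceq> w}"
  unfolding preorder_filter_def
proof (intro conjI ballI allI impI)
  show "top \<in> {w. \<exists>q\<in>F. inf q z \<preceq> w}"
    using preorder_filter_top[OF F] le_imp_rel[OF top_greatest] by blast
  fix x y
  show "y \<in> {w. \<exists>q\<in>F. inf q z \<preceq> w}" if "x \<in> {w. \<exists>q\<in>F. inf q z \<preceq> w}" "x \<preceq> y"
    using that rel_trans by blast
  assume "x \<in> {w. \<exists>q\<in>F. inf q z \<preceq> w}" "y \<in> {w. \<exists>q\<in>F. inf q z \<preceq> w}"
  then obtain p q where pq: "p \<in> F" "q \<in> F" "inf p z \<preceq> x" "inf q z \<preceq> y"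
    by blast
  have "inf (inf p q) z \<preceq> inf x y"
  proof (rule rel_infI)
    show "inf (inf p q) z \<preceq> x"
      by (rule rel_trans[OF le_imp_rel pq(3)]) (simp add: inf.coboundedI1 le_infI2)
    show "inf (inf p q) z \<preceq> y"
      by (rule rel_trans[OF le_imp_rel pq(4)]) (simp add: inf.coboundedI2 le_infI1)
  qed
  then show "inf x y \<in> {w. \<exists>q\<in>F. inf q z \<preceq> w}"
    using preorder_filter_inf[OF F pq(1,2)] by blast
qed

lemma maximal_preorder_filter_meets_ideal:
  assumes M: "preorder_filter M" and I: "preorder_ideal I"
    and maximal: "\<And>F. preorder_filter F \<Longrightarrow> M \<subseteq> F \<Longrightarrow> F \<inter> I = {} \<Longrightarrow> F = M"
    and "z \<notin> M"
  shows "\<exists>q\<in>M. inf q z \<in> I"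
proof (rule ccontr)
  define F where "F = {w. \<exists>q\<in>M. inf q z \<preceq> w}"
  assume "\<not> (\<exists>q\<in>M. inf q z \<in> I)"
  then have "F \<inter> I = {}"
    unfolding F_def using preorder_ideal_downward[OF I] by blast
  moreover have "M \<subseteq> F"
    unfolding F_def using le_imp_rel[OF inf_le1] by blast
  ultimately have "F = M"
    using maximal preorder_filter_extend[OF M] unfolding F_def by blast
  moreover have "z \<in> F"
    unfolding F_def using preorder_filter_top[OF M] rel_refl[of z] by force
  ultimately show False
    using \<open>z \<notin> M\<close> by blast
qed

lemma maximal_preorder_filter_prime:
  assumes M: "preorder_filter M" and I: "preorder_ideal I" and disj: "M \<inter> I = {}"
    and maximal: "\<And>F. preorder_filter F \<Longrightarrow> M \<subseteq> F \<Longrightarrow> F \<inter> I = {} \<Longrightarrow> F = M"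
  shows "prime_filter M"
proof -
  have prime: "x \<in> M \<or> y \<in> M" if "sup x y \<in> M" for x y
  proof (rule ccontr)
    assume "\<not> (x \<in> M \<or> y \<in> M)"
    then obtain p q where pq: "p \<in> M" "q \<in> M" "inf p x \<in> I" "inf q y \<in> I"
      using maximal_preorder_filter_meets_ideal[OF M I maximal] by blast
    have "inf (inf p q) x \<in> I" "inf (inf p q) y \<in> I"
      using preorder_ideal_downward[OF I pq(3)] preorder_ideal_downward[OF I pq(4)]
      by (simp_all add: le_imp_rel inf.coboundedI1 inf.coboundedI2 le_infI1 le_infI2)
    then have "inf (inf p q) (sup x y) \<in> I"
      using preorder_ideal_sup[OF I] by (simp add: inf_sup_distrib1)
    moreover have "inf (inf p q) (sup x y) \<in> M"
      using preorder_filter_inf[OF M] pq(1,2) that by blast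
    ultimately show False
      using disj by blast
  qed
  have "bot \<notin> M"
    using preorder_ideal_bot[OF I] disj by blast
  then show ?thesis
    unfolding prime_filter_def
    using preorder_filter_top[OF M] preorder_filter_inf[OF M] preorder_filter_upward[OF M]
      le_imp_rel prime by blast
qed

theorem prime_filter_separation:
  assumes F: "preorder_filter F" and I: "preorder_ideal I" and disj: "F \<inter> I = {}"
  shows "\<exists>Q. prime_filter Q \<and> preorder_filter Q \<and> F \<subseteq> Q \<and> Q \<inter> I = {}"
proof -
  define \<A> where "\<A> = {Q. preorder_filter Q \<and> F \<subseteq> Q \<and> Q \<inter> I = {}}"
  have "\<Union>\<C> \<in> \<A>" if "\<C> \<noteq> {}" "subset.chain \<A> \<C>" for \<C>
  proof -
    have "\<C> \<subseteq> \<A>" "\<forall>F\<in>\<C>. \<forall>G\<in>\<C>. F \<subseteq> G \<or> G \<subseteq> F"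
      using that(2) unfolding subset.chain_def by blast+
    moreover from this have "preorder_filter (\<Union>\<C>)"
      using preorder_filter_Union_chain[OF that(1)] unfolding \<A>_def by blast
    ultimately show ?thesis
      using that(1) unfolding \<A>_def by blast
  qed
  moreover have "F \<in> \<A>"
    using F disj unfolding \<A>_def by blast
  ultimately obtain M where M: "M \<in> \<A>" and maximal: "\<forall>G\<in>\<A>. M \<subseteq> G \<longrightarrow> G = M"
    using subset_Zorn_nonempty[of \<A>] by blast
  have "prime_filter M"
  proof (rule maximal_preorder_filter_prime[OF _ I])
    show "preorder_filter M" "M \<inter> I = {}"
      using M unfolding \<A>_def by blast+
    show "G = M" if "preorder_filter G" "M \<subseteq> G" "G \<inter> I = {}" for G
      using maximal M that unfolding \<A>_def by blast
  qed
  then show ?thesis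
    using M unfolding \<A>_def by blast
qed

corollary prime_filter_separation_principal:
  assumes "\<not> m \<preceq> j"
  shows "\<exists>Q. prime_filter Q \<and> preorder_filter Q \<and> m \<in> Q \<and> j \<notin> Q"
proof -
  have "preorder_filter {x. m \<preceq> x}"
    unfolding preorder_filter_def using le_imp_rel[OF top_greatest] rel_infI rel_trans by blast
  moreover have "preorder_ideal {x. x \<preceq> j}"
    unfolding preorder_ideal_def using le_imp_rel[OF bot_least] rel_supI rel_trans by blast
  moreover have "{x. m \<preceq> x} \<inter> {x. x \<preceq> j} = {}"
    using assms rel_trans by blast
  ultimately show ?thesis
    using prime_filter_separation rel_refl by blast
qed

end

section \<open>The spectral space\<close>

lemma sigmaA_subset_Xspec: "sigmaA a \<subseteq> Xspec"
  unfolding sigmaA_def by blast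

lemma sigmaA_top [simp]: "sigmaA top = Xspec"
  unfolding sigmaA_def using prime_filter_top mem_Xspec_iff by blast

lemma sigmaA_bot [simp]: "sigmaA bot = {}"
  unfolding sigmaA_def mem_Xspec_iff using prime_filter_bot by auto

lemma sigmaA_inf: "sigmaA (inf a b) = sigmaA a \<inter> sigmaA b"
  unfolding sigmaA_def mem_Xspec_iff using prime_filter_inf_iff by auto

lemma sigmaA_sup: "sigmaA (sup a b) = sigmaA a \<union> sigmaA b"
  unfolding sigmaA_def mem_Xspec_iff using prime_filter_sup_iff by auto

lemma sigmaA_mono: "a \<le> b \<Longrightarrow> sigmaA a \<subseteq> sigmaA b"
  unfolding sigmaA_def mem_Xspec_iff using prime_filter_upward by auto

lemma topology_generated_by_subbase:
  "topology_generated_by \<S> =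
     topology (arbitrary union_of (finite intersection_of (\<lambda>S. S \<in> \<S>) relative_to \<Union>\<S>))"
  unfolding generate_topology_on_eq
proof (rule topology_bases_eq)
  fix U x
  assume "(finite' intersection_of (\<lambda>S. S \<in> \<S>)) U" "x \<in> U"
  then show "\<exists>V. (finite intersection_of (\<lambda>S. S \<in> \<S>) relative_to \<Union>\<S>) V \<and> x \<in> V \<and> V \<subseteq> U"
    unfolding intersection_of_def relative_to_def by blast
next
  fix V x
  assume "(finite intersection_of (\<lambda>S. S \<in> \<S>) relative_to \<Union>\<S>) V" "x \<in> V"
  then obtain \<U> where "finite \<U>" "\<U> \<subseteq> \<S>" "V = \<Union>\<S> \<inter> \<Inter>\<U>"
    unfolding intersection_of_def relative_to_def by blast
  show "\<exists>U. (finite' intersection_of (\<lambda>S. S \<in> \<S>)) U \<and> x \<in> U \<and> U \<subseteq> V"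
  proof (cases "\<U> = {}")
    case True
    with \<open>x \<in> V\<close> \<open>V = \<Union>\<S> \<inter> \<Inter>\<U>\<close> obtain S where "S \<in> \<S>" "x \<in> S"
      by blast
    then show ?thesis
      using True \<open>V = \<Union>\<S> \<inter> \<Inter>\<U>\<close> by (intro exI[of _ S]) (auto intro: finite'_intersection_of_inc)
  next
    case False
    then have "V = \<Inter>\<U>"
      using \<open>\<U> \<subseteq> \<S>\<close> \<open>V = \<Union>\<S> \<inter> \<Inter>\<U>\<close> by blast
    then show ?thesis
      using False \<open>finite \<U>\<close> \<open>\<U> \<subseteq> \<S>\<close> \<open>x \<in> V\<close>
      unfolding intersection_of_def by blast
  qed
qed

lemma topspace_tauA [simp]: "topspace tauA = Xspec"
  unfolding tauA_def using sigmaA_subset_Xspec sigmaA_top by fastforce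

lemma openin_sigmaA: "openin tauA (sigmaA a)"
  unfolding tauA_def by (rule topology_generated_by_Basis) blast

lemma openin_Diff_sigmaA: "openin tauA (Xspec - sigmaA a)"
  unfolding tauA_def by (rule topology_generated_by_Basis) blast

lemma openin_sigmaA_Diff: "openin tauA (sigmaA m - sigmaA j)"
proof -
  have "sigmaA m - sigmaA j = sigmaA m \<inter> (Xspec - sigmaA j)"
    using sigmaA_subset_Xspec by blast
  then show ?thesis
    by (simp add: openin_Int openin_sigmaA openin_Diff_sigmaA)
qed

lemma openin_tauA_basic_neighbourhood:
  assumes "openin tauA V" "P \<in> V"
  shows "\<exists>m j. P \<in> sigmaA m - sigmaA j \<and> sigmaA m - sigmaA j \<subseteq> V"
  using assms(1)[unfolded tauA_def, THEN openin_topology_generated_by] assms(2)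
proof (induction arbitrary: P)
  case Empty
  then show ?case by simp
next
  case (Int U V)
  then obtain m1 j1 m2 j2 where "P \<in> sigmaA m1 - sigmaA j1" "sigmaA m1 - sigmaA j1 \<subseteq> U"
    "P \<in> sigmaA m2 - sigmaA j2" "sigmaA m2 - sigmaA j2 \<subseteq> V"
    by blast
  then show ?case
    by (intro exI[of _ "inf m1 m2"] exI[of _ "sup j1 j2"]) (auto simp: sigmaA_inf sigmaA_sup)
next
  case (UN \<K>)
  then show ?case by blast
next
  case (Basis S)
  then obtain a where "S = sigmaA a - sigmaA bot \<or> S = sigmaA top - sigmaA a"
    by auto
  then show ?case
    using Basis.prems by blast
qed

interpretation lattice_order: lattice_preorder "(\<le>) :: 'a::{distrib_lattice,bounded_lattice} \<Rightarrow> 'a \<Rightarrow> bool"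
  by unfold_locales auto

lemma lattice_order_filter_generated:
  "lattice_order.preorder_filter {x. \<exists>B0\<subseteq>B. finite B0 \<and> Xspec \<inter> \<Inter>(sigmaA ` B0) \<subseteq> sigmaA x}"
  (is "lattice_order.preorder_filter ?F")
  unfolding lattice_order.preorder_filter_def
proof (intro conjI ballI allI impI)
  show "top \<in> ?F"
    by (intro CollectI exI[of _ "{}"]) simp
  show "inf x y \<in> ?F" if "x \<in> ?F" "y \<in> ?F" for x y
  proof -
    from that obtain B1 B2 where "B1 \<subseteq> B" "finite B1" "Xspec \<inter> \<Inter>(sigmaA ` B1) \<subseteq> sigmaA x"
      "B2 \<subseteq> B" "finite B2" "Xspec \<inter> \<Inter>(sigmaA ` B2) \<subseteq> sigmaA y"
      by blast
    then show ?thesis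
      by (intro CollectI exI[of _ "B1 \<union> B2"]) (auto simp: sigmaA_inf)
  qed
  show "y \<in> ?F" if "x \<in> ?F" "x \<le> y" for x y
    using that(1) sigmaA_mono[OF that(2)] by blast
qed

lemma lattice_order_ideal_generated:
  "lattice_order.preorder_ideal {y. \<exists>A0\<subseteq>A. finite A0 \<and> sigmaA y \<subseteq> \<Union>(sigmaA ` A0)}"
  (is "lattice_order.preorder_ideal ?I")
  unfolding lattice_order.preorder_ideal_def
proof (intro conjI ballI allI impI)
  show "bot \<in> ?I"
    by (intro CollectI exI[of _ "{}"]) simp
  show "sup x y \<in> ?I" if "x \<in> ?I" "y \<in> ?I" for x y
  proof -
    from that obtain A1 A2 where "A1 \<subseteq> A" "finite A1" "sigmaA x \<subseteq> \<Union>(sigmaA ` A1)"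
      "A2 \<subseteq> A" "finite A2" "sigmaA y \<subseteq> \<Union>(sigmaA ` A2)"
      by blast
    then show ?thesis
      by (intro CollectI exI[of _ "A1 \<union> A2"]) (auto simp: sigmaA_sup)
  qed
  show "x \<in> ?I" if "y \<in> ?I" "x \<le> y" for x y
    using that(1) sigmaA_mono[OF that(2)] by blast
qed

lemma sigmaA_finite_subcover:
  fixes A B :: "'a::{distrib_lattice,bounded_lattice} set"
  assumes cover: "Xspec \<subseteq> \<Union>(sigmaA ` A) \<union> \<Union>((\<lambda>b. Xspec - sigmaA b) ` B)"
  shows "\<exists>A0\<subseteq>A. \<exists>B0\<subseteq>B. finite A0 \<and> finite B0 \<and>
           Xspec \<subseteq> \<Union>(sigmaA ` A0) \<union> \<Union>((\<lambda>b. Xspec - sigmaA b) ` B0)"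
proof (rule ccontr)
  assume no_finite_subcover: "\<not> ?thesis"
  \<comment> \<open>the filter generated by B and the ideal generated by A, described via sigmaA
    so that no finite meets or joins have to be formed\<close>
  define F where "F = {x. \<exists>B0\<subseteq>B. finite B0 \<and> Xspec \<inter> \<Inter>(sigmaA ` B0) \<subseteq> sigmaA x}"
  define I where "I = {y. \<exists>A0\<subseteq>A. finite A0 \<and> sigmaA y \<subseteq> \<Union>(sigmaA ` A0)}"
  have "F \<inter> I = {}"
  proof (rule ccontr)
    assume "F \<inter> I \<noteq> {}"
    then obtain x A0 B0 where A0: "A0 \<subseteq> A" "finite A0" and B0: "B0 \<subseteq> B" "finite B0"
      and x: "Xspec \<inter> \<Inter>(sigmaA ` B0) \<subseteq> sigmaA x" "sigmaA x \<subseteq> \<Union>(sigmaA ` A0)"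
      unfolding F_def I_def by blast
    have "Xspec \<subseteq> \<Union>(sigmaA ` A0) \<union> \<Union>((\<lambda>b. Xspec - sigmaA b) ` B0)"
    proof
      fix P :: "'a set"
      assume "P \<in> Xspec"
      then show "P \<in> \<Union>(sigmaA ` A0) \<union> \<Union>((\<lambda>b. Xspec - sigmaA b) ` B0)"
        using x by (cases "P \<in> \<Inter>(sigmaA ` B0)") blast+
    qed
    with no_finite_subcover A0 B0 show False
      by blast
  qed
  moreover have "lattice_order.preorder_filter F" "lattice_order.preorder_ideal I"
    unfolding F_def I_def by (rule lattice_order_filter_generated lattice_order_ideal_generated)+
  ultimately obtain Q where Q: "prime_filter Q" "F \<subseteq> Q" "Q \<inter> I = {}"
    using lattice_order.prime_filter_separation by blast
  have "Q \<in> \<Union>(sigmaA ` A) \<union> \<Union>((\<lambda>b. Xspec - sigmaA b) ` B)"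
    using cover Q(1) mem_Xspec_iff by blast
  then consider a where "a \<in> A" "a \<in> Q" | b where "b \<in> B" "b \<notin> Q"
    unfolding sigmaA_def by blast
  then show False
  proof cases
    case (1 a)
    then have "a \<in> I"
      unfolding I_def by (intro CollectI exI[of _ "{a}"]) auto
    then show False
      using Q(3) \<open>a \<in> Q\<close> by blast
  next
    case (2 b)
    then have "b \<in> F"
      unfolding F_def by (intro CollectI exI[of _ "{b}"]) (auto simp: sigmaA_def)
    then show False
      using Q(2) \<open>b \<notin> Q\<close> by blast
  qed
qed

lemma compact_space_tauA: "compact_space (tauA :: 'a::{distrib_lattice,bounded_lattice} set topology)"
proof (rule Alexander_subbase)
  define \<S> :: "'a set set set"
    where "\<S> = range sigmaA \<union> range (\<lambda>a. Xspec - sigmaA a)"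
  show "topology (arbitrary union_of (finite intersection_of (\<lambda>S. S \<in> \<S>) relative_to \<Union>\<S>)) = tauA"
    unfolding tauA_def \<S>_def by (rule topology_generated_by_subbase[symmetric])
  fix \<C>
  assume "\<C> \<subseteq> \<S>" "\<Union>\<C> = topspace tauA"
  define A where "A = {a. sigmaA a \<in> \<C>}"
  define B where "B = {b. Xspec - sigmaA b \<in> \<C>}"
  have \<C>_eq: "\<C> = sigmaA ` A \<union> (\<lambda>b. Xspec - sigmaA b) ` B"
  proof
    show "\<C> \<subseteq> sigmaA ` A \<union> (\<lambda>b. Xspec - sigmaA b) ` B"
    proof
      fix S
      assume "S \<in> \<C>"
      then obtain c where "S = sigmaA c \<or> S = Xspec - sigmaA c"
        using \<open>\<C> \<subseteq> \<S>\<close> unfolding \<S>_def by blast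
      with \<open>S \<in> \<C>\<close> show "S \<in> sigmaA ` A \<union> (\<lambda>b. Xspec - sigmaA b) ` B"
        unfolding A_def B_def by blast
    qed
    show "sigmaA ` A \<union> (\<lambda>b. Xspec - sigmaA b) ` B \<subseteq> \<C>"
      unfolding A_def B_def by blast
  qed
  have "Xspec \<subseteq> \<Union>(sigmaA ` A) \<union> \<Union>((\<lambda>b. Xspec - sigmaA b) ` B)"
    using \<open>\<Union>\<C> = topspace tauA\<close> unfolding \<C>_eq by simp
  from sigmaA_finite_subcover[OF this] obtain A0 B0 where "A0 \<subseteq> A" "B0 \<subseteq> B" "finite A0" "finite B0"
    and cover: "Xspec \<subseteq> \<Union>(sigmaA ` A0) \<union> \<Union>((\<lambda>b. Xspec - sigmaA b) ` B0)"
    by blast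
  define \<C>' where "\<C>' = sigmaA ` A0 \<union> (\<lambda>b. Xspec - sigmaA b) ` B0"
  have "\<Union>\<C>' = Xspec"
  proof
    show "\<Union>\<C>' \<subseteq> Xspec"
      unfolding \<C>'_def using sigmaA_subset_Xspec by blast
    show "Xspec \<subseteq> \<Union>\<C>'"
      unfolding \<C>'_def Union_Un_distrib by (rule cover)
  qed
  moreover have "finite \<C>'"
    unfolding \<C>'_def using \<open>finite A0\<close> \<open>finite B0\<close> by simp
  moreover have "\<C>' \<subseteq> \<C>"
    unfolding \<C>'_def \<C>_eq using \<open>A0 \<subseteq> A\<close> \<open>B0 \<subseteq> B\<close> by blast
  ultimately show "\<exists>\<C>'. finite \<C>' \<and> \<C>' \<subseteq> \<C> \<and> \<Union>\<C>' = topspace tauA"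
    by (intro exI[of _ \<C>']) simp
qed

section \<open>Clopen sets\<close>

lemma BA_subset_Xspec: "U \<in> BA \<Longrightarrow> U \<subseteq> Xspec"
  unfolding BA_def using openin_subset[of tauA U] by simp

lemma Xspec_in_BA: "Xspec \<in> BA"
  unfolding BA_def using openin_topspace[of tauA] closedin_topspace[of tauA] by simp

lemma empty_in_BA: "{} \<in> BA"
  unfolding BA_def by simp

lemma Un_in_BA: "U \<in> BA \<Longrightarrow> V \<in> BA \<Longrightarrow> U \<union> V \<in> BA"
  unfolding BA_def by (simp add: openin_Un closedin_Un)

lemma Int_in_BA: "U \<in> BA \<Longrightarrow> V \<in> BA \<Longrightarrow> U \<inter> V \<in> BA"
  unfolding BA_def by (simp add: openin_Int closedin_Int)

lemma Diff_in_BA: "U \<in> BA \<Longrightarrow> Xspec - U \<in> BA"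
  unfolding BA_def
  using openin_diff[OF openin_topspace, of tauA U] closedin_diff[OF closedin_topspace, of tauA U] by simp

lemma sigmaA_in_BA: "sigmaA a \<in> BA"
  unfolding BA_def closedin_def by (simp add: openin_sigmaA openin_Diff_sigmaA sigmaA_subset_Xspec)

definition implication_set :: "('a::{distrib_lattice,bounded_lattice} \<times> 'a) set \<Rightarrow> 'a set set" where
  "implication_set L = {P \<in> Xspec. \<forall>(m, j)\<in>L. m \<in> P \<longrightarrow> j \<in> P}"

lemma implication_set_in_BA: "finite L \<Longrightarrow> implication_set L \<in> BA"
proof (induction L rule: finite_induct)
  case empty
  then show ?case
    unfolding implication_set_def using Xspec_in_BA by simp
next
  case (insert p L)
  obtain m j where "p = (m, j)"
    by fastforce
  then have "implication_set (insert p L) = ((Xspec - sigmaA m) \<union> sigmaA j) \<inter> implication_set L"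
    unfolding implication_set_def sigmaA_def by auto
  then show ?case
    using insert.IH by (simp add: Diff_in_BA Int_in_BA Un_in_BA sigmaA_in_BA)
qed

lemma BA_implication_set:
  fixes U :: "'a::{distrib_lattice,bounded_lattice} set set"
  assumes "U \<in> BA"
  shows "\<exists>L. finite L \<and> U = implication_set L"
proof -
  define basic :: "'a \<times> 'a \<Rightarrow> 'a set set" where "basic = (\<lambda>(m, j). sigmaA m - sigmaA j)"
  define L0 where "L0 = {p. basic p \<subseteq> Xspec - U}"
  have "compactin tauA (Xspec - U)"
    using assms closedin_diff[OF closedin_topspace, of tauA U]
    by (simp add: BA_def closedin_compact_space[OF compact_space_tauA])
  moreover have "Xspec - U \<subseteq> \<Union>(basic ` L0)"
  proof
    fix P
    assume "P \<in> Xspec - U"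
    moreover have "openin tauA (Xspec - U)"
      using assms by (simp add: BA_def closedin_def)
    ultimately obtain m j where "P \<in> sigmaA m - sigmaA j" "sigmaA m - sigmaA j \<subseteq> Xspec - U"
      using openin_tauA_basic_neighbourhood by blast
    then show "P \<in> \<Union>(basic ` L0)"
      unfolding L0_def basic_def by blast
  qed
  moreover have "\<forall>B\<in>basic ` L0. openin tauA B"
    unfolding basic_def by (auto simp: openin_sigmaA_Diff)
  ultimately obtain \<F> where "finite \<F>" "\<F> \<subseteq> basic ` L0" "Xspec - U \<subseteq> \<Union>\<F>"
    unfolding compactin_def by meson
  then obtain L where L: "L \<subseteq> L0" "finite L" "Xspec - U \<subseteq> \<Union>(basic ` L)"
    using finite_subset_image by metis
  have "U = implication_set L"
  proof
    show "U \<subseteq> implication_set L"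
      using BA_subset_Xspec[OF assms] L(1) unfolding L0_def basic_def implication_set_def sigmaA_def
      by fast
    show "implication_set L \<subseteq> U"
      using L(3) unfolding basic_def implication_set_def sigmaA_def by fast
  qed
  then show ?thesis
    using L(2) by blast
qed

section \<open>The tense operators\<close>

lemma box_converse_adjunction:
  assumes "R \<subseteq> X \<times> X" "x \<subseteq> X"
  shows "X - {p \<in> X. R\<inverse> `` {p} \<subseteq> X - x} \<subseteq> y \<longleftrightarrow> x \<subseteq> {p \<in> X. R `` {p} \<subseteq> y}"
  using assms by blast

lemma RA_subset_Xspec: "RA imp \<subseteq> Xspec \<times> Xspec"
  unfolding RA_def by blast

context
  fixes imp coimp :: "'a::{distrib_lattice,bounded_lattice} \<Rightarrow> 'a \<Rightarrow> 'a"
  assumes whb: "WHB imp coimp"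
begin

lemma imp_self: "imp a a = top"
  using whb unfolding WHB_def by simp

lemma imp_inf_distrib: "imp a (inf b c) = inf (imp a b) (imp a c)"
  using whb unfolding WHB_def by simp

lemma imp_sup_distrib: "imp (sup a b) c = inf (imp a c) (imp b c)"
  using whb unfolding WHB_def by simp

lemma imp_trans: "inf (imp a b) (imp b c) \<le> imp a c"
  using whb unfolding WHB_def by simp

lemma coimp_self: "coimp a a = bot"
  using whb unfolding WHB_def by simp

lemma coimp_sup_distrib: "coimp (sup a b) c = sup (coimp a c) (coimp b c)"
  using whb unfolding WHB_def by simp

lemma coimp_inf_distrib: "coimp a (inf b c) = sup (coimp a b) (coimp a c)"
  using whb unfolding WHB_def by simp

lemma coimp_trans: "coimp a c \<le> sup (coimp a b) (coimp b c)"
  using whb unfolding WHB_def by simp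

lemma inf_coimp_imp_bot_le: "inf a (coimp (imp a b) bot) \<le> b"
  using whb unfolding WHB_def by simp

lemma le_sup_imp_top_coimp: "a \<le> sup b (imp top (coimp a b))"
  using whb unfolding WHB_def by simp

lemma imp_eq_top_if_le: "a \<le> b \<Longrightarrow> imp a b = top"
  using imp_inf_distrib[of a a b] by (simp add: imp_self inf_absorb1)

lemma coimp_eq_bot_if_le: "a \<le> b \<Longrightarrow> coimp a b = bot"
  using coimp_sup_distrib[of a b b] by (simp add: coimp_self sup_absorb2)

lemma lattice_preorder_imp:
  assumes "prime_filter P"
  shows "lattice_preorder (\<lambda>x y. imp x y \<in> P)"
proof
  fix x y z
  show "x \<le> y \<Longrightarrow> imp x y \<in> P"
    using assms by (simp add: imp_eq_top_if_le prime_filter_top)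
  show "imp x y \<in> P \<Longrightarrow> imp y z \<in> P \<Longrightarrow> imp x z \<in> P"
    using assms imp_trans prime_filter_inf_iff prime_filter_upward by metis
  show "imp x y \<in> P \<Longrightarrow> imp x z \<in> P \<Longrightarrow> imp x (inf y z) \<in> P"
    using assms by (simp add: imp_inf_distrib prime_filter_inf_iff)
  show "imp x z \<in> P \<Longrightarrow> imp y z \<in> P \<Longrightarrow> imp (sup x y) z \<in> P"
    using assms by (simp add: imp_sup_distrib prime_filter_inf_iff)
qed

lemma lattice_preorder_coimp:
  assumes "prime_filter P"
  shows "lattice_preorder (\<lambda>x y. coimp x y \<notin> P)"
proof
  fix x y z
  show "x \<le> y \<Longrightarrow> coimp x y \<notin> P"
    using assms by (simp add: coimp_eq_bot_if_le prime_filter_bot)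
  show "coimp x y \<notin> P \<Longrightarrow> coimp y z \<notin> P \<Longrightarrow> coimp x z \<notin> P"
    using assms coimp_trans[of x z y] prime_filter_sup_iff prime_filter_upward by metis
  show "coimp x y \<notin> P \<Longrightarrow> coimp x z \<notin> P \<Longrightarrow> coimp x (inf y z) \<notin> P"
    using assms by (simp add: coimp_inf_distrib prime_filter_sup_iff)
  show "coimp x z \<notin> P \<Longrightarrow> coimp y z \<notin> P \<Longrightarrow> coimp (sup x y) z \<notin> P"
    using assms by (simp add: coimp_sup_distrib prime_filter_sup_iff)
qed

lemma imp_mem_iff:
  assumes "P \<in> Xspec"
  shows "imp m j \<in> P \<longleftrightarrow> (\<forall>Q. (P, Q) \<in> RA imp \<longrightarrow> m \<in> Q \<longrightarrow> j \<in> Q)"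
proof
  show "imp m j \<in> P \<Longrightarrow> \<forall>Q. (P, Q) \<in> RA imp \<longrightarrow> m \<in> Q \<longrightarrow> j \<in> Q"
    unfolding RA_def by blast
  assume successors: "\<forall>Q. (P, Q) \<in> RA imp \<longrightarrow> m \<in> Q \<longrightarrow> j \<in> Q"
  show "imp m j \<in> P"
  proof (rule ccontr)
    interpret R: lattice_preorder "\<lambda>x y. imp x y \<in> P"
      using assms lattice_preorder_imp mem_Xspec_iff by blast
    assume "imp m j \<notin> P"
    then obtain Q where Q: "prime_filter Q" "R.preorder_filter Q" "m \<in> Q" "j \<notin> Q"
      using R.prime_filter_separation_principal by blast
    then have "(P, Q) \<in> RA imp"
      unfolding RA_def using assms R.preorder_filter_upward mem_Xspec_iff by blast
    then show False
      using successors Q(3,4) by blast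
  qed
qed

lemma coimp_mem_iff:
  assumes "P \<in> Xspec"
  shows "coimp m j \<in> P \<longleftrightarrow> (\<exists>Q. (P, Q) \<in> SA coimp \<and> m \<in> Q \<and> j \<notin> Q)"
proof
  show "\<exists>Q. (P, Q) \<in> SA coimp \<and> m \<in> Q \<and> j \<notin> Q \<Longrightarrow> coimp m j \<in> P"
    unfolding SA_def by blast
  assume "coimp m j \<in> P"
  interpret S: lattice_preorder "\<lambda>x y. coimp x y \<notin> P"
    using assms lattice_preorder_coimp mem_Xspec_iff by blast
  obtain Q where Q: "prime_filter Q" "S.preorder_filter Q" "m \<in> Q" "j \<notin> Q"
    using S.prime_filter_separation_principal \<open>coimp m j \<in> P\<close> by blast
  then have "(P, Q) \<in> SA coimp"
    unfolding SA_def using assms S.preorder_filter_upward mem_Xspec_iff by blast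
  then show "\<exists>Q. (P, Q) \<in> SA coimp \<and> m \<in> Q \<and> j \<notin> Q"
    using Q(3,4) by blast
qed

lemma GA_implication_set:
  "GA imp (implication_set L) = implication_set ((\<lambda>(m, j). (top, imp m j)) ` L)"
proof (intro set_eqI)
  fix P
  show "P \<in> GA imp (implication_set L) \<longleftrightarrow> P \<in> implication_set ((\<lambda>(m, j). (top, imp m j)) ` L)"
  proof (cases "P \<in> Xspec")
    case True
    have "P \<in> GA imp (implication_set L) \<longleftrightarrow> (\<forall>(m, j)\<in>L. \<forall>Q. (P, Q) \<in> RA imp \<longrightarrow> m \<in> Q \<longrightarrow> j \<in> Q)"
      using True RA_subset_Xspec unfolding GA_def implication_set_def by blast
    also have "\<dots> \<longleftrightarrow> (\<forall>(m, j)\<in>L. imp m j \<in> P)"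
      using imp_mem_iff[OF True] by simp
    also have "\<dots> \<longleftrightarrow> P \<in> implication_set ((\<lambda>(m, j). (top, imp m j)) ` L)"
      using True prime_filter_top mem_Xspec_iff unfolding implication_set_def by fast
    finally show ?thesis .
  next
    case False
    then show ?thesis
      unfolding GA_def implication_set_def by blast
  qed
qed

lemma HA_implication_set:
  "HA coimp (implication_set L) = implication_set ((\<lambda>(m, j). (coimp m j, bot)) ` L)"
proof (intro set_eqI)
  fix P
  show "P \<in> HA coimp (implication_set L) \<longleftrightarrow> P \<in> implication_set ((\<lambda>(m, j). (coimp m j, bot)) ` L)"
  proof (cases "P \<in> Xspec")
    case True
    have "P \<in> HA coimp (implication_set L) \<longleftrightarrow> (\<forall>(m, j)\<in>L. \<not> (\<exists>Q. (P, Q) \<in> SA coimp \<and> m \<in> Q \<and> j \<notin> Q))"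
      using True unfolding HA_def implication_set_def SA_def by blast
    also have "\<dots> \<longleftrightarrow> (\<forall>(m, j)\<in>L. coimp m j \<notin> P)"
      using coimp_mem_iff[OF True] by simp
    also have "\<dots> \<longleftrightarrow> P \<in> implication_set ((\<lambda>(m, j). (coimp m j, bot)) ` L)"
      using True prime_filter_bot mem_Xspec_iff unfolding implication_set_def by fast
    finally show ?thesis .
  next
    case False
    then show ?thesis
      unfolding HA_def implication_set_def by blast
  qed
qed

lemma GA_in_BA: "U \<in> BA \<Longrightarrow> GA imp U \<in> BA"
  using BA_implication_set GA_implication_set implication_set_in_BA by (metis finite_imageI)

lemma HA_in_BA: "U \<in> BA \<Longrightarrow> HA coimp U \<in> BA"
  using BA_implication_set HA_implication_set implication_set_in_BA by (metis finite_imageI)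

lemma SA_eq_converse_RA: "SA coimp = (RA imp)\<inverse>"
proof (intro set_eqI iffI)
  fix PQ
  assume "PQ \<in> SA coimp"
  then obtain P Q where "PQ = (P, Q)" "P \<in> Xspec" "Q \<in> Xspec"
    and S: "\<And>a b. a \<in> Q \<Longrightarrow> b \<notin> Q \<Longrightarrow> coimp a b \<in> P"
    unfolding SA_def by blast
  have "b \<in> P" if "imp a b \<in> Q" "a \<in> P" for a b
  proof -
    have "coimp (imp a b) bot \<in> P"
      using S[OF that(1)] prime_filter_bot \<open>Q \<in> Xspec\<close> mem_Xspec_iff by blast
    then show ?thesis
      using that(2) inf_coimp_imp_bot_le \<open>P \<in> Xspec\<close>
      by (meson mem_Xspec_iff prime_filter_inf_iff prime_filter_upward)
  qed
  then show "PQ \<in> (RA imp)\<inverse>"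
    unfolding RA_def using \<open>PQ = (P, Q)\<close> \<open>P \<in> Xspec\<close> \<open>Q \<in> Xspec\<close> by blast
next
  fix PQ
  assume "PQ \<in> (RA imp)\<inverse>"
  then obtain P Q where "PQ = (P, Q)" "P \<in> Xspec" "Q \<in> Xspec"
    and R: "\<And>a b. imp a b \<in> Q \<Longrightarrow> a \<in> P \<Longrightarrow> b \<in> P"
    unfolding RA_def by blast
  have "coimp a b \<in> P" if "a \<in> Q" "b \<notin> Q" for a b
  proof -
    have "imp top (coimp a b) \<in> Q"
      using le_sup_imp_top_coimp[of a b] that \<open>Q \<in> Xspec\<close>
      by (meson mem_Xspec_iff prime_filter_sup_iff prime_filter_upward)
    then show ?thesis
      using R prime_filter_top \<open>P \<in> Xspec\<close> mem_Xspec_iff by blast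
  qed
  then show "PQ \<in> SA coimp"
    unfolding SA_def using \<open>PQ = (P, Q)\<close> \<open>P \<in> Xspec\<close> \<open>Q \<in> Xspec\<close> by blast
qed

lemma past_future_adjunction:
  "x \<subseteq> Xspec \<Longrightarrow> Xspec - HA coimp (Xspec - x) \<subseteq> y \<longleftrightarrow> x \<subseteq> GA imp y"
  unfolding GA_def HA_def SA_eq_converse_RA by (rule box_converse_adjunction[OF RA_subset_Xspec])

lemma future_past_adjunction:
  "x \<subseteq> Xspec \<Longrightarrow> Xspec - GA imp (Xspec - x) \<subseteq> y \<longleftrightarrow> x \<subseteq> HA coimp y"
  using box_converse_adjunction[of "(RA imp)\<inverse>" Xspec x y] RA_subset_Xspec
  unfolding GA_def HA_def SA_eq_converse_RA by blast

end

theorem lemma6p1: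
  fixes imp coimp :: "'a::{distrib_lattice,bounded_lattice} \<Rightarrow> 'a \<Rightarrow> 'a"
  assumes "WHB imp coimp"
  shows "tense_algebra_of_sets (Xspec :: 'a set set) BA (GA imp) (HA coimp)"
proof -
  have "BA \<subseteq> Pow (Xspec :: 'a set set)"
    using BA_subset_Xspec by blast
  moreover have "\<forall>x\<in>BA. \<forall>y\<in>BA. Xspec - HA coimp (Xspec - x) \<subseteq> y \<longleftrightarrow> x \<subseteq> GA imp y"
    using past_future_adjunction[OF assms] BA_subset_Xspec by blast
  moreover have "\<forall>x\<in>BA. \<forall>y\<in>BA. Xspec - GA imp (Xspec - x) \<subseteq> y \<longleftrightarrow> x \<subseteq> HA coimp y"
    using future_past_adjunction[OF assms] BA_subset_Xspec by blast
  ultimately show ?thesis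
    unfolding tense_algebra_of_sets_def
    by (simp add: empty_in_BA Xspec_in_BA Un_in_BA Int_in_BA Diff_in_BA
        GA_in_BA[OF assms] HA_in_BA[OF assms])
qed

end
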